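(* Let $\mathcal{M}$ be a finite $\mathcal{R}$-trivial monoid, let $E_1,\dots,E_p\in\mathbb{Z}\mathcal{M}$ be the complete system of primitive orthogonal idempotents produced by the algorithm described in the context, and let $R$ be a ring with $1\ne0$ having a complete system of primitive orthogonal idempotents $\epsilon_1,\dots,\epsilon_q\in R$. Let $\Theta:\mathbb{Z}\mathcal{M}\to R\mathcal{M}$ be the ring homomorphism $\Theta(\sum_\sigma r_\sigma\cdot\sigma)=\sum_\sigma\theta(r_\sigma)\cdot\sigma$, where $\theta:\mathbb{Z}\to R$ is the unique unital ring homomorphism, and set $\overline{E}_j:=\Theta(E_j)$. Then the elements $\epsilon_i\overline{E}_j$, $i=1,\dots,q$, $j=1,\dots,p$, form a complete system of primitive orthogonal idempotents of $R\mathcal{M}$.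
   Context: $\mathcal{M}$ is $\mathcal{R}$-trivial: $\sigma\mathcal{M}=\tau\mathcal{M}$ implies $\sigma=\tau$; unit $e$, $n=\#\mathcal{M}$. $R$ is an arbitrary (possibly noncommutative) ring with $1\ne0$; $R\mathcal{M}$ is the monoid algebra of formal sums $\sum_\mu r_\mu\cdot\mu$ with $(\sum_\sigma r_\sigma\cdot\sigma)(\sum_\tau s_\tau\cdot\tau)=\sum_\mu(\sum_{\sigma\tau=\mu}r_\sigma s_\tau)\cdot\mu$, and $r\in R$ identified with $r\cdot e$. A complete system of primitive orthogonal idempotents of a ring $A$ is a finite set of nonzero $E_1,\dots,E_p\in A$ with $E_i^2=E_i$, $E_iE_j=0$ for $i\ne j$, each $E_i$ primitive (if $E_i=X+Y$ with $X,Y\in A$, $X^2=X$, $Y^2=Y$, $XY=YX=0$ then $X=0$ or $Y=0$), and $\sum_iE_i=1_A$. The algorithm: fix a generating set $\mathcal{S}$ of $\mathcal{M}$; let $\mathcal{L}_\sigma:=\{\tau:\sigma\tau=\sigma\}$, $\mathcal{L}^{\mathcal{S}}_\sigma:=\mathcal{L}_\sigma\cap\mathcal{S}$; let $\sigma_1,\dots,\sigma_p$ represent the distinct sets $\mathcal{L}^{\mathcal{S}}_\sigma$ and $d_i:=\#\{\sigma:\mathcal{L}^{\mathcal{S}}_\sigma=\mathcal{L}^{\mathcal{S}}_{\sigma_i}\}$; set $T_i:=\prod_{\tau\in\mathcal{L}^{\mathcal{S}}_{\sigma_i}}\tau\prod_{\kappa\in\mathcal{S}\setminus\mathcal{L}^{\mathcal{S}}_{\sigma_i}}(e-\kappa)\in\mathbb{Z}\mathcal{M}$;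 with $\mathcal{P}_{a,b}(X):=e-(e-X^a)^b$, set $E_1:=\mathcal{P}_{a_1,b_1}(T_1)$ and recursively $Q_m:=T_m-\sum_{i<m}T_mE_i-\sum_{i<m}E_iT_m+\sum_{i,j<m}E_iT_mE_j$, $E_m:=\mathcal{P}_{a_m,b_m}(Q_m)$, where $a_m\ge n-d_m$ and $b_m\ge d_m$ are arbitrary nonnegative integers. *)

theory Defs
  imports Main
begin

text \<open>Elements of R M are the functions M \<Rightarrow> R (all finitely supported as M is finite).\<close>

type_synonym ('m, 'r) malg = "'m \<Rightarrow> 'r"

definition malg_add :: "('m, 'r::ring_1) malg \<Rightarrow> ('m, 'r) malg \<Rightarrow> ('m, 'r) malg" where
  "malg_add f g = (\<lambda>\<mu>. f \<mu> + g \<mu>)"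

definition malg_diff :: "('m, 'r::ring_1) malg \<Rightarrow> ('m, 'r) malg \<Rightarrow> ('m, 'r) malg" where
  "malg_diff f g = (\<lambda>\<mu>. f \<mu> - g \<mu>)"

definition malg_zero :: "('m, 'r::ring_1) malg" where
  "malg_zero = (\<lambda>\<mu>. 0)"

definition malg_sum :: "('i \<Rightarrow> ('m, 'r::ring_1) malg) \<Rightarrow> 'i set \<Rightarrow> ('m, 'r) malg" where
  "malg_sum F I = (\<lambda>\<mu>. \<Sum>i\<in>I. F i \<mu>)"

definition malg_mult :: "('m::{monoid_mult,finite}, 'r::ring_1) malg \<Rightarrow> ('m, 'r) malg \<Rightarrow> ('m, 'r) malg" where
  "malg_mult f g = (\<lambda>\<mu>. \<Sum>p\<in>{p. fst p * snd p = \<mu>}. f (fst p) * g (snd p))"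

definition malg_single :: "'r::ring_1 \<Rightarrow> 'm::monoid_mult \<Rightarrow> ('m, 'r) malg" where
  "malg_single r \<sigma> = (\<lambda>\<mu>. if \<mu> = \<sigma> then r else 0)"

definition malg_const :: "'r::ring_1 \<Rightarrow> ('m::monoid_mult, 'r) malg" where
  "malg_const r = malg_single r 1"

definition malg_one :: "('m::monoid_mult, 'r::ring_1) malg" where
  "malg_one = malg_const 1"

definition malg_pow :: "('m::{monoid_mult,finite}, 'r::ring_1) malg \<Rightarrow> nat \<Rightarrow> ('m, 'r) malg" where
  "malg_pow X n = ((malg_mult X) ^^ n) malg_one"

definition malg_prod_list :: "('m::{monoid_mult,finite}, 'r::ring_1) malg list \<Rightarrow> ('m, 'r) malg" where
  "malg_prod_list xs = foldr malg_mult xs malg_one"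

text \<open>Theta : Z M \<rightarrow> R M induced by the unique unital ring hom theta = of_int : Z \<rightarrow> R.\<close>
definition Theta :: "('m, int) malg \<Rightarrow> ('m, 'r::ring_1) malg" where
  "Theta f = (\<lambda>\<mu>. of_int (f \<mu>))"

definition primitive_idem_ring :: "'r::ring_1 \<Rightarrow> bool" where
  "primitive_idem_ring E \<longleftrightarrow>
     (\<forall>X Y. E = X + Y \<and> X * X = X \<and> Y * Y = Y \<and> X * Y = 0 \<and> Y * X = 0 \<longrightarrow> X = 0 \<or> Y = 0)"

definition cpoi_ring :: "'i set \<Rightarrow> ('i \<Rightarrow> 'r::ring_1) \<Rightarrow> bool" where
  "cpoi_ring I E \<longleftrightarrow> finite I \<and>
     (\<forall>i\<in>I. E i \<noteq> 0 \<and> E i * E i = E i \<and> primitive_idem_ring (E i)) \<and>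
     (\<forall>i\<in>I. \<forall>j\<in>I. i \<noteq> j \<longrightarrow> E i * E j = 0) \<and>
     (\<Sum>i\<in>I. E i) = 1"

definition primitive_idem_malg :: "('m::{monoid_mult,finite}, 'r::ring_1) malg \<Rightarrow> bool" where
  "primitive_idem_malg E \<longleftrightarrow>
     (\<forall>X Y. E = malg_add X Y \<and> malg_mult X X = X \<and> malg_mult Y Y = Y \<and>
            malg_mult X Y = malg_zero \<and> malg_mult Y X = malg_zero \<longrightarrow> X = malg_zero \<or> Y = malg_zero)"

definition cpoi_malg :: "'i set \<Rightarrow> ('i \<Rightarrow> ('m::{monoid_mult,finite}, 'r::ring_1) malg) \<Rightarrow> bool" where
  "cpoi_malg I E \<longleftrightarrow> finite I \<and>
     (\<forall>i\<in>I. E i \<noteq> malg_zero \<and> malg_mult (E i) (E i) = E i \<and> primitive_idem_malg (E i)) \<and>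
     (\<forall>i\<in>I. \<forall>j\<in>I. i \<noteq> j \<longrightarrow> malg_mult (E i) (E j) = malg_zero) \<and>
     malg_sum E I = malg_one"

definition R_trivial :: "'m::monoid_mult itself \<Rightarrow> bool" where
  "R_trivial _ \<longleftrightarrow> (\<forall>\<sigma> \<tau> :: 'm. range ((*) \<sigma>) = range ((*) \<tau>) \<longrightarrow> \<sigma> = \<tau>)"

inductive_set generated :: "'m::monoid_mult set \<Rightarrow> 'm set" for S where
  gen_one: "1 \<in> generated S"
| gen_mult: "x \<in> generated S \<Longrightarrow> s \<in> S \<Longrightarrow> x * s \<in> generated S"

definition Lset :: "'m::monoid_mult \<Rightarrow> 'm set" where
  "Lset \<sigma> = {\<tau>. \<sigma> * \<tau> = \<sigma>}"

definition LS :: "'m::monoid_mult set \<Rightarrow> 'm \<Rightarrow> 'm set" where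
  "LS S \<sigma> = Lset \<sigma> \<inter> S"

definition Ppoly :: "nat \<Rightarrow> nat \<Rightarrow> ('m::{monoid_mult,finite}, 'r::ring_1) malg \<Rightarrow> ('m, 'r) malg" where
  "Ppoly a b X = malg_diff malg_one (malg_pow (malg_diff malg_one (malg_pow X a)) b)"

text \<open>Q_m computed from T_m and the previous idempotents E_0, ..., E_{m-1} (list Es).\<close>
definition Qstep :: "('m::{monoid_mult,finite}, 'r::ring_1) malg list \<Rightarrow> ('m, 'r) malg \<Rightarrow> ('m, 'r) malg" where
  "Qstep Es T = malg_add
      (malg_diff (malg_diff T (malg_sum (\<lambda>i. malg_mult T (Es ! i)) {..<length Es}))
                 (malg_sum (\<lambda>i. malg_mult (Es ! i) T) {..<length Es}))
      (malg_sum (\<lambda>(i,j). malg_mult (malg_mult (Es ! i) T) (Es ! j)) ({..<length Es} \<times> {..<length Es}))"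

text \<open>Es T a b m = [E_0, ..., E_{m-1}] (0-based indexing).\<close>
primrec Es :: "(nat \<Rightarrow> ('m::{monoid_mult,finite}, 'r::ring_1) malg) \<Rightarrow> (nat \<Rightarrow> nat) \<Rightarrow> (nat \<Rightarrow> nat)
               \<Rightarrow> nat \<Rightarrow> ('m, 'r) malg list" where
  "Es T a b 0 = []"
| "Es T a b (Suc m) = Es T a b m @ [Ppoly (a m) (b m) (Qstep (Es T a b m) (T m))]"

definition algE :: "(nat \<Rightarrow> ('m::{monoid_mult,finite}, 'r::ring_1) malg) \<Rightarrow> (nat \<Rightarrow> nat) \<Rightarrow> (nat \<Rightarrow> nat)
               \<Rightarrow> nat \<Rightarrow> ('m, 'r) malg" where
  "algE T a b m = Es T a b (Suc m) ! m"

definition Tgen :: "'m::{monoid_mult,finite} list \<Rightarrow> 'm list \<Rightarrow> ('m, int) malg" where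
  "Tgen ls ks = malg_mult (malg_prod_list (map (malg_single 1) ls))
                          (malg_prod_list (map (\<lambda>\<kappa>. malg_diff malg_one (malg_single 1 \<kappa>)) ks))"

end

theory Submission
  imports Defs
begin

text \<open>
  In an R-trivial monoid \<open>x * \<sigma> * \<tau> = x\<close> holds iff \<open>x * \<sigma> = x\<close> and \<open>x * \<tau> = x\<close>, so each
  \<open>x\<close> gives a ring homomorphism \<open>character x f = \<Sum>{f \<sigma> | x * \<sigma> = x}\<close> from the monoid
  algebra to the coefficient ring, and it depends only on \<open>LS S x\<close> when \<open>S\<close> generates. If all characters of \<open>f\<close> are \<open>0\<close> or \<open>1\<close>, with at
  most \<open>a\<close> zeros and \<open>b\<close> ones, then \<open>f ^ a * (1 - f) ^ b = 0\<close> (peel R-maximal elements off a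
  right ideal containing the support); in particular an idempotent with vanishing characters
  is \<open>0\<close>. The characters of \<open>T\<^sub>m\<close>, and hence of \<open>Q\<^sub>m\<close>, are the indicator of the \<open>m\<close>-th class,
  so \<open>E\<^sub>m = P\<^sub>a\<^sub>,\<^sub>b(Q\<^sub>m)\<close> is an idempotent with the same characters, orthogonal to the earlier
  \<open>E\<^sub>i\<close> because \<open>Q\<^sub>m\<close> is; their sum is an idempotent with all characters \<open>1\<close>, hence \<open>1\<close>.
  Finally, a decomposition of \<open>\<epsilon>\<^sub>i * \<Theta>(E\<^sub>j)\<close> into orthogonal idempotents \<open>X + Y\<close> decomposes
  \<open>\<epsilon>\<^sub>i\<close> under the character of a point of the \<open>j\<close>-th class, so one summand has all characters
  zero and vanishes.
\<close>

section \<open>The monoid algebra as a ring\<close>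

typedef ('m, 'r) monoid_algebra = "UNIV :: ('m \<Rightarrow> 'r) set"
  morphisms coeff MA by auto

lemma coeff_MA [simp]: "coeff (MA f) = f"
  by (simp add: MA_inverse)

lemma monoid_algebra_eqI: "(\<And>\<mu>. coeff f \<mu> = coeff g \<mu>) \<Longrightarrow> f = g"
  by (simp add: coeff_inject[symmetric] ext)

lemma MA_eq_iff: "MA f = MA g \<longleftrightarrow> f = g"
  by (simp add: MA_inject)

instantiation monoid_algebra :: (type, ab_group_add) ab_group_add
begin

definition "0 = MA (\<lambda>_. 0)"
definition "f + g = MA (\<lambda>\<mu>. coeff f \<mu> + coeff g \<mu>)"
definition "f - g = MA (\<lambda>\<mu>. coeff f \<mu> - coeff g \<mu>)"
definition "- f = MA (\<lambda>\<mu>. - coeff f \<mu>)"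

instance
  by standard (auto intro!: monoid_algebra_eqI simp: zero_monoid_algebra_def plus_monoid_algebra_def
      minus_monoid_algebra_def uminus_monoid_algebra_def algebra_simps)

end

lemma coeff_zero [simp]: "coeff 0 \<mu> = 0"
  and coeff_add [simp]: "coeff (f + g) \<mu> = coeff f \<mu> + coeff g \<mu>"
  and coeff_diff [simp]: "coeff (f - g) \<mu> = coeff f \<mu> - coeff g \<mu>"
  by (simp_all add: zero_monoid_algebra_def plus_monoid_algebra_def minus_monoid_algebra_def)

lemma coeff_sum: "coeff (sum F I) \<mu> = (\<Sum>i\<in>I. coeff (F i) \<mu>)"
  by (induct I rule: infinite_finite_induct) auto

lemma malg_mult_eq_double_sum:
  "malg_mult f g \<mu> = (\<Sum>\<sigma>\<in>UNIV. \<Sum>\<tau>\<in>UNIV. if \<sigma> * \<tau> = \<mu> then f \<sigma> * g \<tau> else 0)"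
proof -
  have "(\<Sum>\<sigma>\<in>UNIV. \<Sum>\<tau>\<in>UNIV. if \<sigma> * \<tau> = \<mu> then f \<sigma> * g \<tau> else 0)
      = (\<Sum>p\<in>UNIV \<times> UNIV. if fst p * snd p = \<mu> then f (fst p) * g (snd p) else 0)"
    by (simp add: sum.cartesian_product case_prod_beta)
  also have "\<dots> = (\<Sum>p\<in>{p. fst p * snd p = \<mu>}. f (fst p) * g (snd p))"
    by (simp add: sum.If_cases Int_def)
  finally show ?thesis
    by (simp add: malg_mult_def)
qed

lemma sum_if_eq_collapse:
  fixes F :: "'a::finite \<Rightarrow> 'r::comm_monoid_add"
  shows "(\<Sum>p\<in>UNIV. if k = p \<and> P p then F p else 0) = (if P k then F k else 0)"
  by (simp flip: if_if_eq_conj)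

lemma sum_rotate3:
  "(\<Sum>p\<in>A. \<Sum>a\<in>B. \<Sum>b\<in>C. F p a b) = (\<Sum>a\<in>B. \<Sum>b\<in>C. \<Sum>p\<in>A. F p a b)"
proof -
  have "(\<Sum>p\<in>A. \<Sum>a\<in>B. \<Sum>b\<in>C. F p a b) = (\<Sum>a\<in>B. \<Sum>p\<in>A. \<Sum>b\<in>C. F p a b)"
    by (rule sum.swap)
  also have "\<dots> = (\<Sum>a\<in>B. \<Sum>b\<in>C. \<Sum>p\<in>A. F p a b)"
    by (rule sum.cong[OF refl], rule sum.swap)
  finally show ?thesis .
qed

lemma malg_mult_assoc:
  fixes f g h :: "'m::{monoid_mult,finite} \<Rightarrow> 'r::ring_1"
  shows "malg_mult (malg_mult f g) h = malg_mult f (malg_mult g h)"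
proof
  fix \<mu>
  let ?T = "\<lambda>a b c. if a * b * c = \<mu> then f a * g b * h c else 0"
  have "malg_mult (malg_mult f g) h \<mu>
      = (\<Sum>p\<in>UNIV. \<Sum>c\<in>UNIV. \<Sum>a\<in>UNIV. \<Sum>b\<in>UNIV. if a * b = p \<and> p * c = \<mu> then f a * g b * h c else 0)"
    by (auto simp: malg_mult_eq_double_sum sum_distrib_right intro!: sum.cong)
  also have "\<dots> = (\<Sum>c\<in>UNIV. \<Sum>a\<in>UNIV. \<Sum>b\<in>UNIV. \<Sum>p\<in>UNIV. if a * b = p \<and> p * c = \<mu> then f a * g b * h c else 0)"
    by (rule trans[OF sum.swap], rule sum.cong[OF refl], rule sum_rotate3)
  also have "\<dots> = (\<Sum>c\<in>UNIV. \<Sum>a\<in>UNIV. \<Sum>b\<in>UNIV. ?T a b c)"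
    by (subst sum_if_eq_collapse) simp
  finally have left: "malg_mult (malg_mult f g) h \<mu> = \<dots>" .
  have "malg_mult f (malg_mult g h) \<mu>
      = (\<Sum>a\<in>UNIV. \<Sum>q\<in>UNIV. \<Sum>b\<in>UNIV. \<Sum>c\<in>UNIV. if b * c = q \<and> a * q = \<mu> then f a * g b * h c else 0)"
    by (auto simp: malg_mult_eq_double_sum sum_distrib_left mult.assoc intro!: sum.cong)
  also have "\<dots> = (\<Sum>a\<in>UNIV. \<Sum>b\<in>UNIV. \<Sum>c\<in>UNIV. \<Sum>q\<in>UNIV. if b * c = q \<and> a * q = \<mu> then f a * g b * h c else 0)"
    by (rule sum.cong[OF refl], rule sum_rotate3)
  also have "\<dots> = (\<Sum>a\<in>UNIV. \<Sum>b\<in>UNIV. \<Sum>c\<in>UNIV. ?T a b c)"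
    by (subst sum_if_eq_collapse) (simp add: mult.assoc)
  also have "\<dots> = (\<Sum>c\<in>UNIV. \<Sum>a\<in>UNIV. \<Sum>b\<in>UNIV. ?T a b c)"
    by (rule sum_rotate3[symmetric])
  finally show "malg_mult (malg_mult f g) h \<mu> = malg_mult f (malg_mult g h) \<mu>"
    using left by simp
qed

instantiation monoid_algebra :: ("{monoid_mult,finite}", ring_1) ring_1
begin

definition "1 = MA malg_one"
definition "f * g = MA (malg_mult (coeff f) (coeff g))"

lemma coeff_one: "coeff 1 \<mu> = (if \<mu> = 1 then 1 else 0)"
  by (simp add: one_monoid_algebra_def malg_one_def malg_const_def malg_single_def)

lemma coeff_times:
  "coeff (f * g) \<mu> = (\<Sum>\<sigma>\<in>UNIV. \<Sum>\<tau>\<in>UNIV. if \<sigma> * \<tau> = \<mu> then coeff f \<sigma> * coeff g \<tau> else 0)"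
  by (simp add: times_monoid_algebra_def malg_mult_eq_double_sum)

instance
proof
  fix f g h :: "('a, 'b) monoid_algebra"
  show "f * g * h = f * (g * h)"
    by (simp add: times_monoid_algebra_def malg_mult_assoc)
  show "1 * f = f"
  proof (rule monoid_algebra_eqI)
    fix \<mu>
    have "(\<Sum>\<tau>\<in>UNIV. if \<sigma> * \<tau> = \<mu> then coeff 1 \<sigma> * coeff f \<tau> else 0) = (if \<sigma> = 1 then coeff f \<mu> else 0)"
      for \<sigma>
      by (auto simp: coeff_one cong: if_cong)
    then show "coeff (1 * f) \<mu> = coeff f \<mu>"
      by (simp add: coeff_times)
  qed
  show "f * 1 = f"
  proof (rule monoid_algebra_eqI)
    fix \<mu>
    have "(\<Sum>\<tau>\<in>UNIV. if \<sigma> * \<tau> = \<mu> then coeff f \<sigma> * coeff 1 \<tau> else 0) = (if \<sigma> = \<mu> then coeff f \<mu> else 0)"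
      for \<sigma>
    proof -
      have "(\<Sum>\<tau>\<in>UNIV. if \<sigma> * \<tau> = \<mu> then coeff f \<sigma> * coeff 1 \<tau> else 0)
          = (\<Sum>\<tau>\<in>UNIV. if \<tau> = (1::'a) then (if \<sigma> = \<mu> then coeff f \<mu> else 0) else 0)"
        by (intro sum.cong) (auto simp: coeff_one)
      then show ?thesis
        by simp
    qed
    then show "coeff (f * 1) \<mu> = coeff f \<mu>"
      by (simp add: coeff_times)
  qed
  show "(f + g) * h = f * h + g * h"
    by (rule monoid_algebra_eqI) (auto simp: coeff_times distrib_right simp flip: sum.distrib intro!: sum.cong)
  show "f * (g + h) = f * g + f * h"
    by (rule monoid_algebra_eqI) (auto simp: coeff_times distrib_left simp flip: sum.distrib intro!: sum.cong)
  show "(0::('a, 'b) monoid_algebra) \<noteq> 1"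
  proof
    assume "(0::('a, 'b) monoid_algebra) = 1"
    then have "coeff (0::('a, 'b) monoid_algebra) 1 = coeff 1 1"
      by simp
    then show False
      by (simp add: coeff_one)
  qed
qed

end

lemma MA_add: "MA (malg_add f g) = MA f + MA g"
  and MA_diff: "MA (malg_diff f g) = MA f - MA g"
  and MA_zero: "MA malg_zero = 0"
  and MA_sum: "MA (malg_sum F I) = (\<Sum>i\<in>I. MA (F i))"
  by (auto intro!: monoid_algebra_eqI simp: malg_add_def malg_diff_def malg_zero_def malg_sum_def coeff_sum)

lemma MA_one: "MA malg_one = 1"
  and MA_mult: "MA (malg_mult f g) = MA f * MA g"
  by (simp_all add: one_monoid_algebra_def times_monoid_algebra_def)

lemma MA_pow: "MA (malg_pow X n) = MA X ^ n"
  by (induct n) (simp_all add: malg_pow_def MA_one MA_mult)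

lemma MA_prod_list: "MA (malg_prod_list xs) = (\<Prod>x\<leftarrow>xs. MA x)"
  by (induct xs) (simp_all add: malg_prod_list_def MA_one MA_mult)

lemma all_monoid_algebra: "(\<forall>X. P X) \<longleftrightarrow> (\<forall>f. P (MA f))"
  by (metis coeff_inverse)

lemma primitive_idem_malg_iff: "primitive_idem_malg E \<longleftrightarrow> primitive_idem_ring (MA E)"
  unfolding primitive_idem_malg_def primitive_idem_ring_def
  by (simp only: MA_eq_iff[symmetric] MA_add MA_mult MA_zero
      all_monoid_algebra[where P = "\<lambda>X. \<forall>Y. _ X Y"] all_monoid_algebra[where P = "\<lambda>Y. _ Y"])

lemma cpoi_malg_iff: "cpoi_malg I E \<longleftrightarrow> cpoi_ring I (\<lambda>i. MA (E i))"
  unfolding cpoi_malg_def cpoi_ring_def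
  by (simp only: MA_eq_iff[symmetric] MA_mult MA_zero MA_sum MA_one primitive_idem_malg_iff)

section \<open>Characters\<close>

lemma Lset_mult_iff:
  fixes x :: "'m::monoid_mult"
  assumes R: "R_trivial TYPE('m)"
  shows "\<alpha> * \<beta> \<in> Lset x \<longleftrightarrow> \<alpha> \<in> Lset x \<and> \<beta> \<in> Lset x"
proof
  assume x: "\<alpha> * \<beta> \<in> Lset x"
  then have x': "x * \<alpha> * \<beta> = x"
    by (simp add: Lset_def mult.assoc)
  have "range ((*) (x * \<alpha>)) = range ((*) x)"
  proof
    show "range ((*) (x * \<alpha>)) \<subseteq> range ((*) x)"
      by (auto simp: mult.assoc)
    show "range ((*) x) \<subseteq> range ((*) (x * \<alpha>))"
    proof
      fix z
      assume "z \<in> range ((*) x)"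
      then obtain t where "z = x * t"
        by auto
      then have "z = x * \<alpha> * (\<beta> * t)"
        using x' by (metis mult.assoc)
      then show "z \<in> range ((*) (x * \<alpha>))"
        by auto
    qed
  qed
  with R have "x * \<alpha> = x"
    unfolding R_trivial_def by blast
  with x' show "\<alpha> \<in> Lset x \<and> \<beta> \<in> Lset x"
    by (simp add: Lset_def)
next
  assume "\<alpha> \<in> Lset x \<and> \<beta> \<in> Lset x"
  then show "\<alpha> * \<beta> \<in> Lset x"
    by (simp add: Lset_def flip: mult.assoc)
qed

definition character :: "'m \<Rightarrow> ('m::{monoid_mult,finite}, 'r::ring_1) monoid_algebra \<Rightarrow> 'r" where
  "character x f = (\<Sum>\<sigma>\<in>Lset x. coeff f \<sigma>)"

lemma character_add: "character x (f + g) = character x f + character x g"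
  and character_diff: "character x (f - g) = character x f - character x g"
  and character_zero: "character x 0 = 0"
  by (simp_all add: character_def sum.distrib sum_subtractf)

lemma character_sum: "character x (sum F I) = (\<Sum>i\<in>I. character x (F i))"
  unfolding character_def coeff_sum by (rule sum.swap)

lemma character_one: "character x 1 = 1"
  by (simp add: character_def coeff_one Lset_def)

lemma character_eq_sum_if: "character x f = (\<Sum>\<sigma>\<in>UNIV. if \<sigma> \<in> Lset x then coeff f \<sigma> else 0)"
  by (simp add: character_def sum.If_cases)

lemma character_mult:
  fixes f g :: "('m::{monoid_mult,finite}, 'r::ring_1) monoid_algebra"
  assumes R: "R_trivial TYPE('m)"
  shows "character x (f * g) = character x f * character x g"
proof -
  have "character x (f * g)
      = (\<Sum>\<sigma>\<in>UNIV. \<Sum>\<tau>\<in>UNIV. \<Sum>\<mu>\<in>Lset x. if \<sigma> * \<tau> = \<mu> then coeff f \<sigma> * coeff g \<tau> else 0)"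
    unfolding character_def coeff_times by (rule sum_rotate3)
  also have "\<dots> = (\<Sum>\<sigma>\<in>UNIV. \<Sum>\<tau>\<in>UNIV. if \<sigma> * \<tau> \<in> Lset x then coeff f \<sigma> * coeff g \<tau> else 0)"
    by (simp only: sum.delta' finite)
  also have "\<dots> = (\<Sum>\<sigma>\<in>UNIV. \<Sum>\<tau>\<in>UNIV.
      (if \<sigma> \<in> Lset x then coeff f \<sigma> else 0) * (if \<tau> \<in> Lset x then coeff g \<tau> else 0))"
    by (intro sum.cong) (simp_all add: Lset_mult_iff[OF R])
  also have "\<dots> = character x f * character x g"
    by (simp only: character_eq_sum_if sum_product)
  finally show ?thesis .
qed

lemma character_power:
  assumes "R_trivial TYPE('m::{monoid_mult,finite})"
  shows "character x (f ^ n :: ('m, 'r::ring_1) monoid_algebra) = character x f ^ n"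
  by (induct n) (simp_all add: character_one character_mult[OF assms])

lemma character_prod_list:
  assumes "R_trivial TYPE('m::{monoid_mult,finite})"
  shows "character x (prod_list fs :: ('m, 'r::ring_1) monoid_algebra) = (\<Prod>f\<leftarrow>fs. character x f)"
  by (induct fs) (simp_all add: character_one character_mult[OF assms])

section \<open>Powers annihilated by characters\<close>

definition support :: "('m, 'r::zero) monoid_algebra \<Rightarrow> 'm set" where
  "support f = {\<mu>. coeff f \<mu> \<noteq> 0}"

definition right_ideal :: "'m::monoid_mult set \<Rightarrow> bool" where
  "right_ideal D \<longleftrightarrow> (\<forall>y\<in>D. \<forall>t. y * t \<in> D)"

lemma R_trivial_ex_maximal:
  fixes D :: "'m::{monoid_mult,finite} set"
  assumes R: "R_trivial TYPE('m)" and "D \<noteq> {}"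
  obtains x where "x \<in> D" "\<And>y t. y \<in> D \<Longrightarrow> y * t = x \<Longrightarrow> y = x"
proof -
  let ?c = "\<lambda>y::'m. card (range ((*) y))"
  obtain x where x: "x \<in> D" "?c x = Max (?c ` D)"
    using Max_in[of "?c ` D"] \<open>D \<noteq> {}\<close> by fastforce
  have "y = x" if y: "y \<in> D" and yt: "y * t = x" for y t
  proof -
    have sub: "range ((*) x) \<subseteq> range ((*) y)"
      using yt by (auto simp: mult.assoc)
    then have "?c x \<le> ?c y"
      by (intro card_mono) auto
    moreover have "?c y \<le> ?c x"
      using x y by simp
    ultimately have "range ((*) x) = range ((*) y)"
      using card_subset_eq[OF finite sub] by simp
    with R show "y = x"
      unfolding R_trivial_def by metis
  qed
  with x show thesis
    using that by blast
qed

lemma support_mult_subset: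
  fixes v w :: "('m::{monoid_mult,finite}, 'r::ring_1) monoid_algebra"
  assumes D: "right_ideal D" and v: "support v \<subseteq> D" and "x \<in> D"
    and x_max: "\<And>y t. y \<in> D \<Longrightarrow> y * t = x \<Longrightarrow> y = x" and w: "character x w = 0"
  shows "support (v * w) \<subseteq> D - {x}"
proof -
  have v0: "coeff v \<sigma> = 0" if "\<sigma> \<notin> D" for \<sigma>
    using v that by (auto simp: support_def)
  have "coeff (v * w) \<mu> = 0" if \<mu>: "\<mu> \<notin> D" for \<mu>
  proof -
    have "coeff v \<sigma> * coeff w \<tau> = 0" if "\<sigma> * \<tau> = \<mu>" for \<sigma> \<tau>
      using D \<mu> that v0[of \<sigma>] by (auto simp: right_ideal_def)
    then show ?thesis
      unfolding coeff_times by (intro sum.neutral ballI) simp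
  qed
  moreover have "coeff (v * w) x = 0"
  proof -
    have "(\<Sum>\<tau>\<in>UNIV. if \<sigma> * \<tau> = x then coeff v \<sigma> * coeff w \<tau> else 0)
        = (if \<sigma> = x then coeff v x * character x w else 0)" for \<sigma>
    proof (cases "\<sigma> = x")
      case True
      then show ?thesis
        by (simp add: character_eq_sum_if sum_distrib_left Lset_def if_distrib cong: if_cong)
    next
      case False
      have "coeff v \<sigma> * coeff w \<tau> = 0" if "\<sigma> * \<tau> = x" for \<tau>
        using x_max[OF _ that] v0[of \<sigma>] False by (cases "\<sigma> \<in> D") auto
      with False show ?thesis
        by (simp add: sum.neutral)
    qed
    then show ?thesis
      by (simp add: coeff_times w)
  qed
  ultimately show ?thesis
    by (auto simp: support_def)
qed

lemma right_ideal_remove_maximal: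
  fixes D :: "'m::{monoid_mult,finite} set"
  assumes R: "R_trivial TYPE('m)" and D: "right_ideal D" and "D \<noteq> {}"
  shows "\<exists>x\<in>D. right_ideal (D - {x}) \<and>
    (\<forall>v w :: ('m, 'r::ring_1) monoid_algebra.
       support v \<subseteq> D \<longrightarrow> character x w = 0 \<longrightarrow> support (v * w) \<subseteq> D - {x})"
proof -
  obtain x where "x \<in> D" and x_max: "\<And>y t. y \<in> D \<Longrightarrow> y * t = x \<Longrightarrow> y = x"
    using R_trivial_ex_maximal[OF R \<open>D \<noteq> {}\<close>] by blast
  moreover have "right_ideal (D - {x})"
    using D x_max by (auto simp: right_ideal_def)
  ultimately show ?thesis
    using support_mult_subset[OF D] by blast
qed

lemma mult_power_eq_zero_by_support:
  fixes f :: "('m::{monoid_mult,finite}, 'r::ring_1) monoid_algebra"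
  assumes R: "R_trivial TYPE('m)" and f: "\<And>x. character x f = of_bool (x \<in> C)"
  shows "right_ideal D \<Longrightarrow> support v \<subseteq> D \<Longrightarrow> card (D - C) \<le> a \<Longrightarrow> card (D \<inter> C) \<le> b
    \<Longrightarrow> v * f ^ a * (1 - f) ^ b = 0"
proof (induction "card D" arbitrary: D v a b rule: less_induct)
  case less
  show ?case
  proof (cases "D = {}")
    case True
    with less.prems(2) have "v = 0"
      by (auto intro: monoid_algebra_eqI simp: support_def)
    then show ?thesis
      by simp
  next
    case False
    then obtain x where "x \<in> D" and D': "right_ideal (D - {x})"
      and shrink: "\<And>v w :: ('m, 'r) monoid_algebra.
           support v \<subseteq> D \<Longrightarrow> character x w = 0 \<Longrightarrow> support (v * w) \<subseteq> D - {x}"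
      using right_ideal_remove_maximal[OF R less.prems(1)] by blast
    note IH = less.hyps[OF card_Diff1_less[OF finite \<open>x \<in> D\<close>] D']
    show ?thesis
    proof (cases "x \<in> C")
      case False
      then obtain a' where a: "a = Suc a'" and "card (D - {x} - C) \<le> a'"
        using less.prems(3) \<open>x \<in> D\<close>
        by (cases a) (auto simp: card_gt_0_iff Diff_insert2[symmetric] card_Diff_singleton)
      moreover have "card ((D - {x}) \<inter> C) \<le> b"
        using less.prems(4) by (meson Diff_subset Int_mono card_mono finite order.refl order_trans)
      moreover have "support (v * f) \<subseteq> D - {x}"
        using less.prems(2) f False by (intro shrink) auto
      ultimately have "v * f * f ^ a' * (1 - f) ^ b = 0"
        using IH by blast
      then show ?thesis
        by (simp add: a mult.assoc)
    next
      case True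
      then obtain b' where b: "b = Suc b'" and "card ((D - {x}) \<inter> C) \<le> b'"
        using less.prems(4) \<open>x \<in> D\<close>
        by (cases b) (auto simp: card_gt_0_iff Diff_Int_distrib2 card_Diff_singleton)
      moreover have "card (D - {x} - C) \<le> a"
        using less.prems(3) by (meson Diff_mono Diff_subset card_mono finite order.refl order_trans)
      moreover have "support (v * (1 - f)) \<subseteq> D - {x}"
        using less.prems(2) f True by (intro shrink) (auto simp: character_diff character_one)
      ultimately have "v * (1 - f) * f ^ a * (1 - f) ^ b' = 0"
        using IH by blast
      moreover have "f ^ a * (1 - f) = (1 - f) * f ^ a"
        by (simp add: power_commutes algebra_simps)
      then have "v * f ^ a * (1 - f) ^ b = v * (1 - f) * f ^ a * (1 - f) ^ b'"
        by (simp add: b mult.assoc flip: mult.assoc[of "f ^ a"])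
      ultimately show ?thesis
        by simp
    qed
  qed
qed

lemma power_eq_zero_by_characters:
  fixes f :: "('m::{monoid_mult,finite}, 'r::ring_1) monoid_algebra"
  assumes R: "R_trivial TYPE('m)" and f: "\<And>x. character x f = of_bool (x \<in> C)"
    and "card (- C) \<le> a" and "card C \<le> b"
  shows "f ^ a * (1 - f) ^ b = 0"
  using mult_power_eq_zero_by_support[OF R f, of UNIV 1 a b] assms(3,4)
  by (simp add: right_ideal_def Compl_eq_Diff_UNIV)

lemma idempotent_power: "e * e = e \<Longrightarrow> e ^ Suc n = (e::'a::monoid_mult)"
  by (induct n) (simp_all add: mult.assoc[symmetric])

lemma idempotent_eq_zero_by_characters:
  fixes e :: "('m::{monoid_mult,finite}, 'r::ring_1) monoid_algebra"
  assumes R: "R_trivial TYPE('m)" and "e * e = e" and "\<And>x. character x e = 0"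
  shows "e = 0"
proof -
  obtain n where n: "card (UNIV :: 'm set) = Suc n"
    using card_gt_0_iff[of "UNIV :: 'm set"] gr0_implies_Suc by auto
  have "e ^ Suc n * (1 - e) ^ 0 = 0"
    using assms n by (intro power_eq_zero_by_characters[where C = "{}"]) auto
  then show ?thesis
    using idempotent_power[OF \<open>e * e = e\<close>] by simp
qed

section \<open>The polynomial 1 - (1 - y ^ a) ^ b\<close>

lemma one_minus_power_eq_left: "1 - (y::'a::ring_1) ^ n = (1 - y) * (\<Sum>i<n. y ^ i)"
  by (induct n) (simp_all add: algebra_simps)

lemma one_minus_power_eq_right: "1 - (y::'a::ring_1) ^ n = (\<Sum>i<n. y ^ i) * (1 - y)"
  by (induct n) (simp_all add: algebra_simps power_commutes)

lemma power_mult_commuting: "(x::'a::monoid_mult) * y = y * x \<Longrightarrow> (x * y) ^ n = x ^ n * y ^ n"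
proof (induct n)
  case (Suc n)
  have "x ^ n * y = y * x ^ n"
    using power_commuting_commutes Suc.prems by metis
  then have "x * y * (x ^ n * y ^ n) = x * (x ^ n * y) * y ^ n"
    by (simp add: mult.assoc)
  with Suc show ?case
    by (simp add: mult.assoc)
qed simp

lemma powers_commuting: "(x::'a::monoid_mult) * y = y * x \<Longrightarrow> x ^ m * y ^ n = y ^ n * x ^ m"
  by (metis power_commuting_commutes)

definition Ppoly_ring :: "nat \<Rightarrow> nat \<Rightarrow> 'a::ring_1 \<Rightarrow> 'a" where
  "Ppoly_ring a b y = 1 - (1 - y ^ a) ^ b"

lemma MA_Ppoly: "MA (Ppoly a b X) = Ppoly_ring a b (MA X)"
  by (simp add: Ppoly_def Ppoly_ring_def MA_diff MA_one MA_pow)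

lemma Ppoly_ring_idem:
  fixes y :: "'a::ring_1"
  assumes "y ^ a * (1 - y) ^ b = 0"
  shows "Ppoly_ring a b y * Ppoly_ring a b y = Ppoly_ring a b y"
proof -
  define h where "h = (\<Sum>i<a. y ^ i)"
  define z where "z = 1 - y ^ a"
  have "z = (1 - y) * h" "z = h * (1 - y)"
    unfolding z_def h_def by (rule one_minus_power_eq_left, rule one_minus_power_eq_right)
  then have zb: "z ^ b = (1 - y) ^ b * h ^ b"
    using power_mult_commuting by metis
  have "h * y = y * h"
    by (simp add: h_def sum_distrib_left sum_distrib_right power_commutes)
  then have hy: "h ^ b * y ^ a = y ^ a * h ^ b"
    by (rule powers_commuting)
  have "(1 - y) * y = y * (1 - y)"
    by (simp add: algebra_simps)
  then have "(1 - y) ^ b * y ^ a = y ^ a * (1 - y) ^ b"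
    by (rule powers_commuting)
  with zb hy assms have zy: "z ^ b * y ^ a = 0"
    by (metis mult.assoc mult_zero_left)
  have "1 - z ^ b = y ^ a * (\<Sum>i<b. z ^ i)"
    using one_minus_power_eq_left[of z b] by (simp add: z_def)
  with zy have "z ^ b * (1 - z ^ b) = 0"
    by (simp add: mult.assoc[symmetric])
  then show ?thesis
    by (simp add: Ppoly_ring_def z_def[symmetric] algebra_simps)
qed

lemma Ppoly_ring_factor:
  fixes y :: "'a::ring_1"
  assumes "0 < a"
  obtains g h where "Ppoly_ring a b y = y * g" and "Ppoly_ring a b y = h * y"
proof -
  define G where "G = (\<Sum>i<b. (1 - y ^ a) ^ i)"
  obtain a' where a: "a = Suc a'"
    using assms gr0_implies_Suc by blast
  have P: "Ppoly_ring a b y = y ^ a * G" "Ppoly_ring a b y = G * y ^ a"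
    using one_minus_power_eq_left[of "1 - y ^ a" b] one_minus_power_eq_right[of "1 - y ^ a" b]
    by (simp_all add: Ppoly_ring_def G_def)
  have "y ^ a = y * y ^ a'" "y ^ a = y ^ a' * y"
    by (simp_all add: a power_commutes)
  with P have "Ppoly_ring a b y = y * (y ^ a' * G)" "Ppoly_ring a b y = (G * y ^ a') * y"
    by (simp_all add: mult.assoc)
  then show thesis
    by (rule that)
qed

lemma Ppoly_ring_of_bool:
  assumes "P \<Longrightarrow> 0 < b" and "\<not> P \<Longrightarrow> 0 < a"
  shows "Ppoly_ring a b (of_bool P :: 'a::ring_1) = of_bool P"
  using assms by (cases P) (simp_all add: Ppoly_ring_def zero_power)

lemma character_Ppoly_ring:
  assumes "R_trivial TYPE('m::{monoid_mult,finite})"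
  shows "character x (Ppoly_ring a b f :: ('m, 'r::ring_1) monoid_algebra) = Ppoly_ring a b (character x f)"
  by (simp add: Ppoly_ring_def character_diff character_one character_power[OF assms])

section \<open>The idempotents produced by the algorithm\<close>

definition orthogonal_idempotents :: "'i set \<Rightarrow> ('i \<Rightarrow> 'a::ring_1) \<Rightarrow> bool" where
  "orthogonal_idempotents I E \<longleftrightarrow>
     (\<forall>i\<in>I. E i * E i = E i) \<and> (\<forall>i\<in>I. \<forall>j\<in>I. i \<noteq> j \<longrightarrow> E i * E j = 0)"

lemma orthogonal_idempotents_mult_sum:
  assumes "orthogonal_idempotents I E" and "finite I" and "i \<in> I"
  shows "E i * sum E I = E i" and "sum E I * E i = E i"
proof -
  have "E i * sum E I = (\<Sum>j\<in>I. if j = i then E i else 0)"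
    unfolding sum_distrib_left using assms by (intro sum.cong) (auto simp: orthogonal_idempotents_def)
  then show "E i * sum E I = E i"
    using assms by simp
  have "sum E I * E i = (\<Sum>j\<in>I. if j = i then E i else 0)"
    unfolding sum_distrib_right using assms by (intro sum.cong) (auto simp: orthogonal_idempotents_def)
  then show "sum E I * E i = E i"
    using assms by simp
qed

lemma orthogonal_idempotents_sum_idem:
  assumes "orthogonal_idempotents I E" and "finite I"
  shows "sum E I * sum E I = sum E I"
  unfolding sum_distrib_right[of E I] using orthogonal_idempotents_mult_sum(1)[OF assms]
  by (rule sum.cong[OF refl])

lemma length_Es: "length (Es T a b m) = m"
  by (induct m) auto

lemma nth_Es: "j < m \<Longrightarrow> Es T a b m ! j = algE T a b j"
  by (induct m) (auto simp: algE_def nth_append length_Es less_Suc_eq)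

lemma MA_Qstep:
  "MA (Qstep L T) = (1 - (\<Sum>i<length L. MA (L ! i))) * MA T * (1 - (\<Sum>i<length L. MA (L ! i)))"
proof -
  let ?F = "\<Sum>i<length L. MA (L ! i)"
  have "?F * MA T * ?F = (\<Sum>i<length L. MA (L ! i) * MA T * ?F)"
    by (simp only: sum_distrib_right)
  also have "\<dots> = (\<Sum>i<length L. \<Sum>j<length L. MA (L ! i) * MA T * MA (L ! j))"
    by (simp only: sum_distrib_left)
  also have "\<dots> = (\<Sum>(i, j)\<in>{..<length L} \<times> {..<length L}. MA (L ! i) * MA T * MA (L ! j))"
    by (rule sum.cartesian_product)
  finally have "MA (Qstep L T) = MA T - MA T * ?F - ?F * MA T + ?F * MA T * ?F"
    by (simp add: Qstep_def MA_add MA_diff MA_sum MA_mult case_prod_beta sum_distrib_left sum_distrib_right)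
  also have "\<dots> = (1 - ?F) * MA T * (1 - ?F)"
    by (simp add: algebra_simps)
  finally show ?thesis .
qed

lemma MA_algE:
  "MA (algE T a b m) = Ppoly_ring (a m) (b m)
     ((1 - (\<Sum>j<m. MA (algE T a b j))) * MA (T m) * (1 - (\<Sum>j<m. MA (algE T a b j))))"
proof -
  have "algE T a b m = Ppoly (a m) (b m) (Qstep (Es T a b m) (T m))"
    by (simp add: algE_def nth_append length_Es)
  moreover have "(\<Sum>i<length (Es T a b m). MA (Es T a b m ! i)) = (\<Sum>j<m. MA (algE T a b j))"
    by (simp add: length_Es nth_Es)
  ultimately show ?thesis
    by (simp only: MA_Ppoly MA_Qstep)
qed

lemma card_pos_if_mem: "x \<in> A \<Longrightarrow> card (A::'a::finite set) \<le> n \<Longrightarrow> 0 < n"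
  using card_gt_0_iff[of A] by auto

lemma algE_step:
  fixes T :: "nat \<Rightarrow> ('m::{monoid_mult,finite}, 'r::ring_1) malg" and C :: "nat \<Rightarrow> 'm set"
    and a b :: "nat \<Rightarrow> nat"
  defines "E \<equiv> \<lambda>j. MA (algE T a b j)"
  assumes R: "R_trivial TYPE('m)"
    and orth: "orthogonal_idempotents {..<m} E"
    and E_chi: "\<And>j x. j < m \<Longrightarrow> character x (E j) = of_bool (x \<in> C j)"
    and T_chi: "\<And>x. character x (MA (T m)) = of_bool (x \<in> C m)"
    and disj: "\<And>j. j < m \<Longrightarrow> C j \<inter> C m = {}"
    and ne: "\<And>j. j \<le> m \<Longrightarrow> C j \<noteq> {}"
    and a: "card (- C m) \<le> a m" and b: "card (C m) \<le> b m"
  shows "orthogonal_idempotents {..<Suc m} E" and "character x (E m) = of_bool (x \<in> C m)"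
proof -
  define F where "F = sum E {..<m}"
  define Q where "Q = (1 - F) * MA (T m) * (1 - F)"
  have Em: "E m = Ppoly_ring (a m) (b m) Q"
    unfolding E_def Q_def F_def by (rule MA_algE)
  have Q_chi: "character x Q = of_bool (x \<in> C m)" for x
  proof (cases "x \<in> C m")
    case True
    with disj have "{..<m} \<inter> {j. x \<in> C j} = {}"
      by blast
    then have "character x F = 0"
      by (simp add: F_def character_sum E_chi)
    with True show ?thesis
      by (simp add: Q_def character_mult[OF R] character_diff character_one T_chi)
  next
    case False
    then show ?thesis
      by (simp add: Q_def character_mult[OF R] T_chi)
  qed
  have "Q ^ a m * (1 - Q) ^ b m = 0"
    using R Q_chi a b by (rule power_eq_zero_by_characters)
  then have idem: "E m * E m = E m"
    unfolding Em by (rule Ppoly_ring_idem)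
  show E_chi_m: "character x (E m) = of_bool (x \<in> C m)" for x
    unfolding Em character_Ppoly_ring[OF R] Q_chi
    using a b by (intro Ppoly_ring_of_bool) (auto intro: card_pos_if_mem)
  have "E j * E m = 0 \<and> E m * E j = 0" if "j < m" for j
  proof -
    obtain y where "y \<in> C j"
      using ne[of j] \<open>j < m\<close> by auto
    with disj[OF \<open>j < m\<close>] a have "0 < a m"
      by (intro card_pos_if_mem[of y]) auto
    then obtain g h where g: "E m = Q * g" and h: "E m = h * Q"
      unfolding Em by (rule Ppoly_ring_factor)
    have "E j * (1 - F) = 0" "(1 - F) * E j = 0"
      using orthogonal_idempotents_mult_sum[OF orth _, of j] \<open>j < m\<close>
      by (simp_all add: F_def algebra_simps)
    moreover have "E j * E m = (E j * (1 - F)) * MA (T m) * (1 - F) * g"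
      by (simp add: g Q_def mult.assoc)
    moreover have "E m * E j = h * (1 - F) * MA (T m) * ((1 - F) * E j)"
      by (simp add: h Q_def mult.assoc)
    ultimately show ?thesis
      by simp
  qed
  with orth idem show "orthogonal_idempotents {..<Suc m} E"
    by (auto simp: orthogonal_idempotents_def less_Suc_eq)
qed

lemma algE_orthogonal_idempotents:
  fixes T :: "nat \<Rightarrow> ('m::{monoid_mult,finite}, 'r::ring_1) malg" and C :: "nat \<Rightarrow> 'm set"
    and a b :: "nat \<Rightarrow> nat"
  defines "E \<equiv> \<lambda>j. MA (algE T a b j)"
  assumes R: "R_trivial TYPE('m)"
    and T_chi: "\<And>m x. m < p \<Longrightarrow> character x (MA (T m)) = of_bool (x \<in> C m)"
    and disj: "\<And>i j. i < p \<Longrightarrow> j < p \<Longrightarrow> i \<noteq> j \<Longrightarrow> C i \<inter> C j = {}"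
    and ne: "\<And>m. m < p \<Longrightarrow> C m \<noteq> {}"
    and a: "\<And>m. m < p \<Longrightarrow> card (- C m) \<le> a m"
    and b: "\<And>m. m < p \<Longrightarrow> card (C m) \<le> b m"
  shows "orthogonal_idempotents {..<p} E" and "\<And>j x. j < p \<Longrightarrow> character x (E j) = of_bool (x \<in> C j)"
proof -
  have "orthogonal_idempotents {..<m} E \<and> (\<forall>j<m. \<forall>x. character x (E j) = of_bool (x \<in> C j))"
    if "m \<le> p" for m
    using that
  proof (induction m)
    case 0
    then show ?case
      by (simp add: orthogonal_idempotents_def)
  next
    case (Suc m)
    then have "m < p" and orth: "orthogonal_idempotents {..<m} E"
      and E_chi: "\<And>j x. j < m \<Longrightarrow> character x (E j) = of_bool (x \<in> C j)"
      by auto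
    have "C j \<inter> C m = {}" if "j < m" for j
      using disj that \<open>m < p\<close> by simp
    moreover have "C j \<noteq> {}" if "j \<le> m" for j
      using ne that \<open>m < p\<close> by simp
    ultimately have "orthogonal_idempotents {..<Suc m} E" "\<And>x. character x (E m) = of_bool (x \<in> C m)"
      using algE_step[OF R orth[unfolded E_def] E_chi[unfolded E_def] T_chi[OF \<open>m < p\<close>] _ _
          a[OF \<open>m < p\<close>] b[OF \<open>m < p\<close>]]
      by (simp_all add: E_def)
    with E_chi show ?case
      by (auto simp: less_Suc_eq)
  qed
  then show "orthogonal_idempotents {..<p} E" "\<And>j x. j < p \<Longrightarrow> character x (E j) = of_bool (x \<in> C j)"
    by blast+
qed

lemma sum_eq_one_by_characters:
  fixes E :: "'i \<Rightarrow> ('m::{monoid_mult,finite}, 'r::ring_1) monoid_algebra"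
  assumes R: "R_trivial TYPE('m)" and "orthogonal_idempotents I E" and "finite I"
    and "\<And>x. character x (sum E I) = 1"
  shows "sum E I = 1"
proof -
  have "(1 - sum E I) * (1 - sum E I) = 1 - sum E I"
    using orthogonal_idempotents_sum_idem[OF assms(2,3)] by (simp add: algebra_simps)
  then have "1 - sum E I = 0"
    using R assms(4) by (intro idempotent_eq_zero_by_characters) (simp_all add: character_diff character_one)
  then show ?thesis
    by simp
qed

section \<open>Characters of Tgen and the classes of LS S\<close>

lemma prod_list_of_bool: "(\<Prod>t\<leftarrow>xs. of_bool (P t)) = (of_bool (\<forall>t\<in>set xs. P t) :: 'a::semiring_1)"
  by (induct xs) auto

lemma character_single: "character x (MA (malg_single 1 \<tau>)) = of_bool (\<tau> \<in> Lset x)"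
  by (simp add: character_def malg_single_def)

lemma character_Tgen:
  fixes r :: "'m::{monoid_mult,finite}"
  assumes R: "R_trivial TYPE('m)" and "set ls = LS S r" and "set ks = S - LS S r"
  shows "character x (MA (Tgen ls ks)) = of_bool (LS S x = LS S r)"
proof -
  have "character x (MA (Tgen ls ks))
      = of_bool (\<forall>\<tau>\<in>set ls. \<tau> \<in> Lset x) * of_bool (\<forall>\<kappa>\<in>set ks. \<kappa> \<notin> Lset x)"
    by (simp add: Tgen_def MA_mult MA_prod_list MA_diff MA_one o_def character_mult[OF R]
        character_prod_list[OF R] character_diff character_one character_single prod_list_of_bool
        flip: of_bool_not_iff)
  also have "\<dots> = of_bool (LS S x = LS S r)"
    using assms(2,3) by (auto simp: LS_def)
  finally show ?thesis .
qed

lemma Lset_eq_if_LS_eq: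
  fixes x y :: "'m::monoid_mult"
  assumes R: "R_trivial TYPE('m)" and gen: "generated S = UNIV" and L: "LS S x = LS S y"
  shows "Lset x = Lset y"
proof -
  have "\<tau> \<in> Lset x \<longleftrightarrow> \<tau> \<in> Lset y" if "\<tau> \<in> generated S" for \<tau>
    using that
  proof (induction rule: generated.induct)
    case gen_one
    then show ?case
      by (simp add: Lset_def)
  next
    case (gen_mult t s)
    then have "s \<in> Lset x \<longleftrightarrow> s \<in> Lset y"
      using L by (auto simp: LS_def)
    with gen_mult.IH show ?case
      by (simp add: Lset_mult_iff[OF R])
  qed
  with gen show ?thesis
    by auto
qed

lemma LS_representative:
  assumes "LS S ` set rs = LS S ` UNIV" and "distinct (map (LS S) rs)"
  shows "\<exists>j<length rs. {..<length rs} \<inter> {j. LS S x = LS S (rs ! j)} = {j}"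
proof -
  obtain j where j: "j < length rs" "LS S x = LS S (rs ! j)"
    using assms(1) by (metis UNIV_I image_iff in_set_conv_nth)
  have "i = j" if "i < length rs" "LS S x = LS S (rs ! i)" for i
    using nth_eq_iff_index_eq[OF assms(2)] that j by simp
  with j show ?thesis
    by blast
qed

section \<open>Scalars from R\<close>

lemma primitive_idem_by_characters:
  fixes P :: "('m::{monoid_mult,finite}, 'r::ring_1) monoid_algebra"
  assumes R: "R_trivial TYPE('m)" and gen: "generated S = UNIV"
    and P_chi: "\<And>x. LS S x \<noteq> LS S r \<Longrightarrow> character x P = 0"
    and prim: "primitive_idem_ring (character r P)"
  shows "primitive_idem_ring P"
  unfolding primitive_idem_ring_def
proof (intro allI impI)
  fix X Y
  assume h: "P = X + Y \<and> X * X = X \<and> Y * Y = Y \<and> X * Y = 0 \<and> Y * X = 0"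
  have vanish: "Z = 0" if Z: "Z * Z = Z" "Z * P = Z" "character r Z = 0" for Z
  proof (rule idempotent_eq_zero_by_characters[OF R \<open>Z * Z = Z\<close>])
    fix x
    show "character x Z = 0"
    proof (cases "LS S x = LS S r")
      case True
      then show ?thesis
        using Lset_eq_if_LS_eq[OF R gen True] Z(3) by (simp add: character_def)
    next
      case False
      then show ?thesis
        using Z(2) P_chi character_mult[OF R, of x Z P] by simp
    qed
  qed
  let ?c = "character r"
  have "?c P = ?c X + ?c Y" "?c X * ?c X = ?c X" "?c Y * ?c Y = ?c Y" "?c X * ?c Y = 0" "?c Y * ?c X = 0"
    using h by (simp_all add: character_add character_zero flip: character_mult[OF R])
  with prim have "?c X = 0 \<or> ?c Y = 0"
    unfolding primitive_idem_ring_def by blast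
  moreover have "X * P = X" "Y * P = Y"
    using h by (simp_all add: distrib_left)
  ultimately show "X = 0 \<or> Y = 0"
    using h vanish by blast
qed

definition scalar :: "'r::ring_1 \<Rightarrow> ('m::{monoid_mult,finite}, 'r) monoid_algebra" where
  "scalar r = MA (malg_const r)"

lemma coeff_scalar: "coeff (scalar r) \<mu> = (if \<mu> = 1 then r else 0)"
  by (simp add: scalar_def malg_const_def malg_single_def)

lemma coeff_scalar_mult: "coeff (scalar r * g) \<mu> = r * coeff g \<mu>"
proof -
  have "(\<Sum>\<tau>\<in>UNIV. if \<sigma> * \<tau> = \<mu> then coeff (scalar r) \<sigma> * coeff g \<tau> else 0)
      = (if \<sigma> = 1 then r * coeff g \<mu> else 0)" for \<sigma>
    by (auto simp: coeff_scalar cong: if_cong)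
  then show ?thesis
    by (simp add: coeff_times)
qed

lemma coeff_mult_scalar: "coeff (g * scalar r) (\<mu>::'m::{monoid_mult,finite}) = coeff g \<mu> * r"
proof -
  have "(\<Sum>\<tau>\<in>UNIV. if \<sigma> * \<tau> = \<mu> then coeff g \<sigma> * coeff (scalar r) \<tau> else 0)
      = (if \<sigma> = \<mu> then coeff g \<mu> * r else 0)" for \<sigma>
  proof -
    have "(\<Sum>\<tau>\<in>UNIV. if \<sigma> * \<tau> = \<mu> then coeff g \<sigma> * coeff (scalar r) \<tau> else 0)
        = (\<Sum>\<tau>\<in>UNIV. if \<tau> = (1::'m) then (if \<sigma> = \<mu> then coeff g \<mu> * r else 0) else 0)"
      by (intro sum.cong) (auto simp: coeff_scalar)
    then show ?thesis
      by simp
  qed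
  then show ?thesis
    by (simp add: coeff_times)
qed

lemma scalar_mult: "scalar (r * s) = scalar r * scalar s"
  and scalar_zero: "scalar 0 = 0"
  and scalar_one: "scalar 1 = 1"
  and scalar_sum: "scalar (sum F I) = (\<Sum>i\<in>I. scalar (F i))"
  by (auto intro!: monoid_algebra_eqI simp: coeff_scalar_mult coeff_scalar coeff_one coeff_sum)

lemma character_scalar: "character x (scalar r) = r"
  by (simp add: character_def coeff_scalar Lset_def)

definition theta :: "('m, int) monoid_algebra \<Rightarrow> ('m::{monoid_mult,finite}, 'r::ring_1) monoid_algebra" where
  "theta f = MA (Theta (coeff f))"

lemma coeff_theta: "coeff (theta f) \<mu> = of_int (coeff f \<mu>)"
  by (simp add: theta_def Theta_def)

lemma theta_mult: "theta (f * g) = theta f * theta g"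
  and theta_zero: "theta 0 = 0"
  and theta_one: "theta 1 = 1"
  and theta_sum: "theta (sum F I) = (\<Sum>i\<in>I. theta (F i))"
  by (auto intro!: monoid_algebra_eqI simp: coeff_theta coeff_times coeff_one coeff_sum
      if_distrib[of of_int] cong: if_cong)

lemma character_theta: "character x (theta f) = of_int (character x f)"
  by (simp add: character_def coeff_theta)

lemma scalar_theta_commute: "scalar r * theta f = theta f * scalar r"
  by (rule monoid_algebra_eqI) (simp add: coeff_scalar_mult coeff_mult_scalar coeff_theta mult_of_int_commute)

lemma MA_const: "MA (malg_const r) = scalar r"
  and MA_Theta: "MA (Theta f) = theta (MA f)"
  by (simp_all add: scalar_def theta_def)

lemma cpoi_ring_scalar_theta:
  fixes E :: "'j \<Rightarrow> ('m::{monoid_mult,finite}, int) monoid_algebra" and \<epsilon> :: "'i \<Rightarrow> 'r::ring_1"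
    and r :: "'j \<Rightarrow> 'm"
  assumes R: "R_trivial TYPE('m)" and gen: "generated S = UNIV"
    and eps: "cpoi_ring I \<epsilon>"
    and "finite J" and E_orth: "orthogonal_idempotents J E" and E_sum: "sum E J = 1"
    and E_chi: "\<And>j x. j \<in> J \<Longrightarrow> character x (E j) = of_bool (LS S x = LS S (r j))"
  shows "cpoi_ring (I \<times> J) (\<lambda>(i, j). scalar (\<epsilon> i) * theta (E j))"
proof -
  define P where "P = (\<lambda>i j. scalar (\<epsilon> i) * theta (E j) :: ('m, 'r) monoid_algebra)"
  have eps_idem: "\<And>i. i \<in> I \<Longrightarrow> \<epsilon> i \<noteq> 0 \<and> \<epsilon> i * \<epsilon> i = \<epsilon> i \<and> primitive_idem_ring (\<epsilon> i)"
    and eps_orth: "\<And>i k. i \<in> I \<Longrightarrow> k \<in> I \<Longrightarrow> i \<noteq> k \<Longrightarrow> \<epsilon> i * \<epsilon> k = 0"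
    using eps by (auto simp: cpoi_ring_def)
  have P_mult: "P i j * P k l = scalar (\<epsilon> i * \<epsilon> k) * theta (E j * E l)" for i j k l
    by (simp add: P_def scalar_mult theta_mult mult.assoc flip: mult.assoc[of "theta (E j)"] scalar_theta_commute)
  have P_chi: "character x (P i j) = \<epsilon> i * of_bool (LS S x = LS S (r j))" if "j \<in> J" for i j x
    using that by (simp add: P_def character_mult[OF R] character_scalar character_theta E_chi)
  have "cpoi_ring (I \<times> J) (\<lambda>(i, j). P i j)"
    unfolding cpoi_ring_def
  proof (intro conjI ballI impI)
    show "finite (I \<times> J)"
      using eps \<open>finite J\<close> by (simp add: cpoi_ring_def)
  next
    fix q
    assume "q \<in> I \<times> J"
    then obtain i j where q: "q = (i, j)" and "i \<in> I" "j \<in> J"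
      by auto
    show "(case q of (i, j) \<Rightarrow> P i j) \<noteq> 0"
      using P_chi[OF \<open>j \<in> J\<close>, of "r j" i] eps_idem[OF \<open>i \<in> I\<close>] by (auto simp: q character_zero)
    show "(case q of (i, j) \<Rightarrow> P i j) * (case q of (i, j) \<Rightarrow> P i j) = (case q of (i, j) \<Rightarrow> P i j)"
      using E_orth eps_idem[OF \<open>i \<in> I\<close>] \<open>j \<in> J\<close>
      by (simp add: q P_mult orthogonal_idempotents_def, simp add: P_def)
    show "primitive_idem_ring (case q of (i, j) \<Rightarrow> P i j)"
      using P_chi[OF \<open>j \<in> J\<close>] eps_idem[OF \<open>i \<in> I\<close>]
      by (simp add: q primitive_idem_by_characters[OF R gen, of "r j"])
  next
    fix q q'
    assume "q \<in> I \<times> J" "q' \<in> I \<times> J" "q \<noteq> q'"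
    then obtain i j k l where q: "q = (i, j)" "q' = (k, l)" and "i \<in> I" "j \<in> J" "k \<in> I" "l \<in> J"
      and "i \<noteq> k \<or> j \<noteq> l"
      by auto
    then show "(case q of (i, j) \<Rightarrow> P i j) * (case q' of (i, j) \<Rightarrow> P i j) = 0"
      using E_orth eps_orth by (auto simp: q P_mult orthogonal_idempotents_def scalar_zero theta_zero)
  next
    have "(\<Sum>(i, j)\<in>I \<times> J. P i j) = (\<Sum>i\<in>I. scalar (\<epsilon> i) * (\<Sum>j\<in>J. theta (E j)))"
      by (simp add: P_def sum_distrib_left flip: sum.cartesian_product)
    also have "\<dots> = (\<Sum>i\<in>I. scalar (\<epsilon> i)) * theta (sum E J)"
      by (simp add: sum_distrib_right theta_sum)
    finally have "(\<Sum>(i, j)\<in>I \<times> J. P i j) = (\<Sum>i\<in>I. scalar (\<epsilon> i)) * theta (sum E J)" .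
    then show "(\<Sum>q\<in>I \<times> J. case q of (i, j) \<Rightarrow> P i j) = 1"
      using eps by (simp add: E_sum theta_one scalar_one cpoi_ring_def flip: scalar_sum)
  qed
  then show ?thesis
    by (simp add: P_def)
qed

lemma algE_complete_system:
  fixes S :: "'m::{monoid_mult,finite} set" and rs :: "'m list" and ls ks :: "nat \<Rightarrow> 'm list"
    and a b :: "nat \<Rightarrow> nat"
  defines "E \<equiv> \<lambda>j. MA (algE (\<lambda>m. Tgen (ls m) (ks m)) a b j) :: ('m, int) monoid_algebra"
  assumes R: "R_trivial TYPE('m)"
    and reps_all: "LS S ` set rs = LS S ` UNIV"
    and reps_dist: "distinct (map (LS S) rs)"
    and ls: "\<And>m. m < length rs \<Longrightarrow> set (ls m) = LS S (rs ! m)"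
    and ks: "\<And>m. m < length rs \<Longrightarrow> set (ks m) = S - LS S (rs ! m)"
    and a: "\<And>m. m < length rs \<Longrightarrow> card (UNIV :: 'm set) - card {\<sigma>. LS S \<sigma> = LS S (rs ! m)} \<le> a m"
    and b: "\<And>m. m < length rs \<Longrightarrow> card {\<sigma>. LS S \<sigma> = LS S (rs ! m)} \<le> b m"
  shows "orthogonal_idempotents {..<length rs} E" and "sum E {..<length rs} = 1"
    and "\<And>j x. j < length rs \<Longrightarrow> character x (E j) = of_bool (LS S x = LS S (rs ! j))"
proof -
  define C where "C j = {\<sigma>. LS S \<sigma> = LS S (rs ! j)}" for j
  have C_iff: "x \<in> C j \<longleftrightarrow> LS S x = LS S (rs ! j)" for x j
    by (simp add: C_def)
  have rep: "\<exists>j<length rs. {..<length rs} \<inter> {j. x \<in> C j} = {j}" for x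
    unfolding C_iff by (rule LS_representative[OF reps_all reps_dist])
  have classes: "{..<length rs} \<inter> {j. x \<in> C j} = {j}" if "j < length rs" "x \<in> C j" for x j
  proof -
    obtain j' where j': "{..<length rs} \<inter> {j. x \<in> C j} = {j'}"
      using rep[of x] by blast
    moreover have "j \<in> {..<length rs} \<inter> {j. x \<in> C j}"
      using that by simp
    ultimately show ?thesis
      by simp
  qed
  have disj: "C i \<inter> C j = {}" if "i < length rs" "j < length rs" "i \<noteq> j" for i j
  proof (rule equals0I)
    fix x
    assume "x \<in> C i \<inter> C j"
    with classes[of i x] classes[of j x] that show False
      by auto
  qed
  have T_chi: "character x (MA (Tgen (ls m) (ks m))) = of_bool (x \<in> C m)" if "m < length rs" for m x
    using character_Tgen[OF R ls[OF that] ks[OF that]] by (simp add: C_def)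
  have ne: "C m \<noteq> {}" and card_a: "card (- C m) \<le> a m" and card_b: "card (C m) \<le> b m"
    if "m < length rs" for m
    using a[OF that] b[OF that] C_iff[of "rs ! m" m]
    by (auto simp: C_def Compl_eq_Diff_UNIV card_Diff_subset)
  note algE = algE_orthogonal_idempotents[where p = "length rs", OF R]
  have orth: "orthogonal_idempotents {..<length rs} E"
    unfolding E_def by (rule algE(1)) (fact T_chi disj ne card_a card_b)+
  have E_chi: "character x (E j) = of_bool (x \<in> C j)" if "j < length rs" for j x
    unfolding E_def by (rule algE(2)) (fact T_chi disj ne card_a card_b that)+
  show "orthogonal_idempotents {..<length rs} E"
    by (fact orth)
  show "character x (E j) = of_bool (LS S x = LS S (rs ! j))" if "j < length rs" for j x
    using E_chi[OF that] by (simp add: C_def)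
  have "character x (sum E {..<length rs}) = 1" for x
  proof -
    obtain j where "j < length rs" "x \<in> C j"
      using rep[of x] by blast
    then show ?thesis
      by (simp add: character_sum E_chi classes)
  qed
  then show "sum E {..<length rs} = 1"
    using R orth by (intro sum_eq_one_by_characters) auto
qed

theorem mainTheorem10:
  fixes S :: "'m::{monoid_mult,finite} set"
    and rs :: "'m list"
    and ls ks :: "nat \<Rightarrow> 'm list"
    and a b :: "nat \<Rightarrow> nat"
    and I :: "'i set"
    and \<epsilon> :: "'i \<Rightarrow> 'r::ring_1"
  assumes Rtriv: "R_trivial TYPE('m)"
    and gen: "generated S = UNIV"
    and reps_all: "LS S ` set rs = LS S ` UNIV"
    and reps_dist: "distinct (map (LS S) rs)"
    and ls: "\<And>m. m < length rs \<Longrightarrow> distinct (ls m) \<and> set (ls m) = LS S (rs ! m)"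
    and ks: "\<And>m. m < length rs \<Longrightarrow> distinct (ks m) \<and> set (ks m) = S - LS S (rs ! m)"
    and a: "\<And>m. m < length rs \<Longrightarrow>
              a m \<ge> card (UNIV :: 'm set) - card {\<sigma>. LS S \<sigma> = LS S (rs ! m)}"
    and b: "\<And>m. m < length rs \<Longrightarrow> b m \<ge> card {\<sigma>. LS S \<sigma> = LS S (rs ! m)}"
    and R_nontriv: "(1::'r) \<noteq> 0"
    and eps: "cpoi_ring I \<epsilon>"
  shows "cpoi_malg (I \<times> {..<length rs})
           (\<lambda>(i, j). malg_mult (malg_const (\<epsilon> i))
                        (Theta (algE (\<lambda>m. Tgen (ls m) (ks m)) a b j) :: ('m, 'r) malg))"
proof -
  define E where "E j = MA (algE (\<lambda>m. Tgen (ls m) (ks m)) a b j)" for j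
  note system = algE_complete_system[OF Rtriv reps_all reps_dist, of ls ks a b]
  have "orthogonal_idempotents {..<length rs} E" "sum E {..<length rs} = 1"
    and "\<And>j x. j < length rs \<Longrightarrow> character x (E j) = of_bool (LS S x = LS S (rs ! j))"
    unfolding E_def using ls ks a b by (simp_all add: system)
  then have "cpoi_ring (I \<times> {..<length rs}) (\<lambda>(i, j). scalar (\<epsilon> i) * theta (E j) :: ('m, 'r) monoid_algebra)"
    by (intro cpoi_ring_scalar_theta[OF Rtriv gen eps]) auto
  then show ?thesis
    by (simp add: cpoi_malg_iff split_def MA_mult MA_const MA_Theta E_def)
qed

end
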